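(* Assume the abstract framework described in the context. Let $f\in\mathcal{D}_2$ and $g\in\mathcal{N}_2$, and let $u=\mathbf{D}^B_\Omega f$ or $u=(\mathbf{S}^L_\Omega g)|_\Omega$. Then $(Lu)|_\Omega=0$, that is, $B^\Omega(\varphi|_\Omega,u)=0$ for every $\varphi\in\mathcal{H}_1$ with $\operatorname{Tr}_1\varphi=0$.
   Context: Abstract framework. Let $\mathcal{H}_1,\mathcal{H}_2$ be complex Hilbert spaces, and for $j=1,2$ let $\widehat{\mathcal{H}}_j^\Omega$, $\widehat{\mathcal{H}}_j^{\mathcal{C}}$, $\widehat{\mathcal{D}}_j$ be normed (or seminormed) vector spaces. We are given bounded linear operators $\operatorname{Tr}_j:\mathcal{H}_j\to\widehat{\mathcal{D}}_j$ and bounded linear "restriction" operators $F\mapsto F|_\Omega$ from $\mathcal{H}_j$ to $\widehat{\mathcal{H}}_j^\Omega$ and $F\mapsto F|_{\mathcal{C}}$ from $\mathcal{H}_j$ to $\widehat{\mathcal{H}}_j^{\mathcal{C}}$. Define $\mathcal{H}_j^\Omega=\{F|_\Omega:F\in\mathcal{H}_j\}$ with norm $\|f\|_{\mathcal{H}_j^\Omega}=\inf\{\|F\|_{\mathcal{H}_j}:F|_\Omega=f\}$, similarly $\mathcal{H}_j^{\mathcal{C}}$, and $\mathcal{D}_j=\{\operatorname{Tr}_jF:F\in\mathcal{H}_j\}$ with the analogous quotient norm (each modulo elements of norm zero). Let $\mathcal{N}_2=\mathcal{D}_1^*$, $\mathcal{N}_1=\mathcal{D}_2^*$, with duality pairings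 $\langle\cdot,\cdot\rangle$. We are given bounded bilinear forms $B:\mathcal{H}_1\times\mathcal{H}_2\to\mathbb{C}$, $B^\Omega:\mathcal{H}_1^\Omega\times\mathcal{H}_2^\Omega\to\mathbb{C}$, $B^{\mathcal{C}}:\mathcal{H}_1^{\mathcal{C}}\times\mathcal{H}_2^{\mathcal{C}}\to\mathbb{C}$, and $\lambda>0$ such that for all $u\in\mathcal{H}_1$, $v\in\mathcal{H}_2$, $\varphi,\psi\in\mathcal{H}_j$: (i) $\sup_{w\ne0}|B(w,v)|/\|w\|_{\mathcal{H}_1}\ge\lambda\|v\|_{\mathcal{H}_2}$ and $\sup_{w\ne0}|B(u,w)|/\|w\|_{\mathcal{H}_2}\ge\lambda\|u\|_{\mathcal{H}_1}$; (ii) $B(u,v)=B^\Omega(u|_\Omega,v|_\Omega)+B^{\mathcal{C}}(u|_{\mathcal{C}},v|_{\mathcal{C}})$; (iii) if $\operatorname{Tr}_j\varphi=\operatorname{Tr}_j\psi$ then there is $w\in\mathcal{H}_j$ with $w|_\Omega=\varphi|_\Omega$, $w|_{\mathcal{C}}=\psi|_{\mathcal{C}}$, $\operatorname{Tr}_jw=\operatorname{Tr}_j\varphi$. Definitions: for $u\in\mathcal{H}_2^\Omega$, we write $(Lu)|_\Omega=0$ if $B^\Omega(\varphi|_\Omega,u)=0$ for all $\varphi\in\mathcal{H}_1$ with $\operatorname{Tr}_1\varphi=0$. For $u\in\mathcal{H}_2^\Omega$, $L(u\mathbf{1}_\Omega)\in\mathcal{H}_1^*$ is $\langle\varphi,L(u\mathbf{1}_\Omega)\rangle=B^\Omega(\varphi|_\Omega,u)$;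 for $F\in\mathcal H_2$, $L(\mathbf 1_\Omega F)=L(F|_\Omega\mathbf 1_\Omega)$. Newton potential: for $H\in\mathcal{H}_1^*$, $\Pi^LH\in\mathcal{H}_2$ is the unique element with $B(\varphi,\Pi^LH)=\langle\varphi,H\rangle$ for all $\varphi\in\mathcal{H}_1$. Single layer potential: for $g\in\mathcal{N}_2$, $\mathbf{S}^L_\Omega g\in\mathcal{H}_2$ is the unique element with $B(\varphi,\mathbf{S}^L_\Omega g)=\langle\operatorname{Tr}_1\varphi,g\rangle$ for all $\varphi\in\mathcal{H}_1$. Double layer potential: for $f\in\mathcal{D}_2$, $\mathbf{D}^B_\Omega f=-F|_\Omega+(\Pi^L(L(\mathbf{1}_\Omega F)))|_\Omega\in\mathcal{H}_2^\Omega$ for any $F\in\mathcal{H}_2$ with $\operatorname{Tr}_2F=f$ (independent of the choice of $F$). *)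

theory Defs
  imports "HOL-Analysis.Analysis"
begin

text \<open>Complex vector spaces are modelled as real vector spaces together with a
  complex structure J (multiplication by the imaginary unit): J real-linear, J (J x) = - x.\<close>

definition cstruct :: "('a::real_vector \<Rightarrow> 'a) \<Rightarrow> bool" where
  "cstruct J \<longleftrightarrow> linear J \<and> (\<forall>x. J (J x) = - x)"

definition cscale :: "('a::real_vector \<Rightarrow> 'a) \<Rightarrow> complex \<Rightarrow> 'a \<Rightarrow> 'a" where
  "cscale J c x = Re c *\<^sub>R x + Im c *\<^sub>R J x"

text \<open>Complex Hilbert space: a real Hilbert space with an orthogonal complex structure
  (the complex inner product is then  x \<bullet> y + i (x \<bullet> J y)).\<close>
definition chilbert_struct :: "('a::{real_inner, complete_space} \<Rightarrow> 'a) \<Rightarrow> bool" where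
  "chilbert_struct J \<longleftrightarrow> cstruct J \<and> (\<forall>x y. J x \<bullet> J y = x \<bullet> y)"

definition clin :: "('a::real_vector \<Rightarrow> 'a) \<Rightarrow> ('b::real_vector \<Rightarrow> 'b) \<Rightarrow> ('a \<Rightarrow> 'b) \<Rightarrow> bool" where
  "clin J1 J2 T \<longleftrightarrow> linear T \<and> (\<forall>x. T (J1 x) = J2 (T x))"

definition cbilin :: "('a::real_vector \<Rightarrow> 'a) \<Rightarrow> ('b::real_vector \<Rightarrow> 'b) \<Rightarrow> ('a \<Rightarrow> 'b \<Rightarrow> complex) \<Rightarrow> bool" where
  "cbilin J1 J2 B \<longleftrightarrow> (\<forall>y. clin J1 (\<lambda>z. \<i> * z) (\<lambda>x. B x y)) \<and> (\<forall>x. clin J2 (\<lambda>z. \<i> * z) (B x))"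

definition cseminorm :: "('a::real_vector \<Rightarrow> 'a) \<Rightarrow> ('a \<Rightarrow> real) \<Rightarrow> bool" where
  "cseminorm J n \<longleftrightarrow> (\<forall>x. 0 \<le> n x) \<and> (\<forall>x y. n (x + y) \<le> n x + n y)
     \<and> (\<forall>c x. n (cscale J c x) = cmod c * n x)"

definition bounded_cmap :: "('a::real_normed_vector \<Rightarrow> 'a) \<Rightarrow> ('b::real_vector \<Rightarrow> 'b) \<Rightarrow> ('b \<Rightarrow> real)
     \<Rightarrow> ('a \<Rightarrow> 'b) \<Rightarrow> bool" where
  "bounded_cmap J1 J2 n T \<longleftrightarrow> clin J1 J2 T \<and> (\<exists>K. \<forall>x. n (T x) \<le> K * norm x)"

definition qnorm :: "('a::real_normed_vector \<Rightarrow> 'b) \<Rightarrow> 'b \<Rightarrow> real" where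
  "qnorm T y = Inf {norm x | x. T x = y}"

text \<open>Equality in the image space T(H) taken modulo elements of (quotient) norm zero.\<close>
definition qeq :: "('a::real_normed_vector \<Rightarrow> 'b::group_add) \<Rightarrow> 'b \<Rightarrow> 'b \<Rightarrow> bool" where
  "qeq T a b \<longleftrightarrow> qnorm T (a - b) = 0"

definition L_vanishes_on_Omega :: "('h1::real_normed_vector \<Rightarrow> 'd1::real_vector) \<Rightarrow> ('h1 \<Rightarrow> 'o1)
     \<Rightarrow> ('o1 \<Rightarrow> 'o2 \<Rightarrow> complex) \<Rightarrow> 'o2 \<Rightarrow> bool" where
  "L_vanishes_on_Omega Tr1 rO1 BO u \<longleftrightarrow> (\<forall>\<phi>. qeq Tr1 (Tr1 \<phi>) 0 \<longrightarrow> BO (rO1 \<phi>) u = 0)"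

end

theory Submission
  imports Defs
begin

text \<open>Given a test function \<open>\<phi>\<close> with vanishing trace, the gluing property produces \<open>w\<close>
  agreeing with \<open>\<phi>\<close> on \<open>\<Omega>\<close> and with \<open>0\<close> on \<open>\<C>\<close>, still of trace zero. By the splitting of
  \<open>B\<close>, the functional \<open>B(w, \<cdot>)\<close> only sees the \<open>\<Omega>\<close>-part, i.e. \<open>B(w, v) = B\<^sup>\<Omega>(\<phi>|\<^sub>\<Omega>, v|\<^sub>\<Omega>)\<close>.
  Testing the defining equation of the double layer potential (resp. single layer
  potential) against \<open>w\<close> then gives \<open>B\<^sup>\<Omega>(\<phi>|\<^sub>\<Omega>, u) = 0\<close>. Since all identities between traces
  and restrictions hold only modulo elements of quotient norm zero, they are transported
  through the forms by their boundedness in the quotient norms.\<close>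

lemma bounded_cmap_linear: "bounded_cmap J1 J2 n T \<Longrightarrow> linear T"
  by (simp add: bounded_cmap_def clin_def)

lemma cbilin_linear_left: "cbilin J1 J2 B \<Longrightarrow> linear (\<lambda>x. B x y)"
  by (simp add: cbilin_def clin_def)

lemma cbilin_linear_right: "cbilin J1 J2 B \<Longrightarrow> linear (B x)"
  by (simp add: cbilin_def clin_def)

lemma qnorm_dominated_respects_qeq:
  fixes h :: "'a::real_normed_vector \<Rightarrow> 'c::real_normed_vector"
  assumes "linear T" and "linear h"
    and bound: "\<And>x. norm (h x) \<le> K * qnorm T (T x)"
    and "qeq T (T a) (T b)"
  shows "h a = h b"
proof -
  have "qnorm T (T (a - b)) = 0"
    using \<open>qeq T (T a) (T b)\<close> by (simp add: qeq_def linear_diff[OF \<open>linear T\<close>])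
  then have "h (a - b) = 0"
    using bound[of "a - b"] by simp
  then show ?thesis
    by (simp add: linear_diff[OF \<open>linear h\<close>])
qed

lemma glued_test_function:
  assumes "linear Tr1" and "linear rO1" and "linear rC1"
    and BO_lin: "\<And>y. linear (\<lambda>x. BO (rO1 x) (rO2 y))"
    and BC_lin: "\<And>y. linear (\<lambda>x. BC (rC1 x) (rC2 y))"
    and BO_bdd: "\<And>u v. cmod (BO (rO1 u) (rO2 v)) \<le> KO * qnorm rO1 (rO1 u) * qnorm rO2 (rO2 v)"
    and BC_bdd: "\<And>u v. cmod (BC (rC1 u) (rC2 v)) \<le> KC * qnorm rC1 (rC1 u) * qnorm rC2 (rC2 v)"
    and split: "\<And>u v. B u v = BO (rO1 u) (rO2 v) + BC (rC1 u) (rC2 v)"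
    and glue: "\<forall>\<phi> \<psi>. qeq Tr1 (Tr1 \<phi>) (Tr1 \<psi>) \<longrightarrow>
        (\<exists>w. qeq rO1 (rO1 w) (rO1 \<phi>) \<and> qeq rC1 (rC1 w) (rC1 \<psi>) \<and> qeq Tr1 (Tr1 w) (Tr1 \<phi>))"
    and trace_zero: "qeq Tr1 (Tr1 \<phi>) 0"
  obtains w where "\<And>v. BO (rO1 w) (rO2 v) = BO (rO1 \<phi>) (rO2 v)"
    and "\<And>v. B w v = BO (rO1 \<phi>) (rO2 v)"
    and "qeq Tr1 (Tr1 w) (Tr1 \<phi>)"
proof -
  have "qeq Tr1 (Tr1 \<phi>) (Tr1 0)"
    using trace_zero by (simp add: linear_0[OF \<open>linear Tr1\<close>])
  then obtain w where wO: "qeq rO1 (rO1 w) (rO1 \<phi>)" and wC: "qeq rC1 (rC1 w) (rC1 0)"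
    and wTr: "qeq Tr1 (Tr1 w) (Tr1 \<phi>)"
    using glue by blast
  have Omega_part: "BO (rO1 w) (rO2 v) = BO (rO1 \<phi>) (rO2 v)" for v
  proof (rule qnorm_dominated_respects_qeq[OF \<open>linear rO1\<close> BO_lin _ wO])
    show "cmod (BO (rO1 x) (rO2 v)) \<le> KO * qnorm rO2 (rO2 v) * qnorm rO1 (rO1 x)" for x
      using BO_bdd[of x v] by (simp add: ac_simps)
  qed
  have "BC (rC1 w) (rC2 v) = BC (rC1 0) (rC2 v)" for v
  proof (rule qnorm_dominated_respects_qeq[OF \<open>linear rC1\<close> BC_lin _ wC])
    show "cmod (BC (rC1 x) (rC2 v)) \<le> KC * qnorm rC2 (rC2 v) * qnorm rC1 (rC1 x)" for x
      using BC_bdd[of x v] by (simp add: ac_simps)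
  qed
  then have C_part: "BC (rC1 w) (rC2 v) = 0" for v
    using linear_0[OF BC_lin] by simp
  show thesis
  proof (rule that[OF Omega_part _ wTr])
    show "B w v = BO (rO1 \<phi>) (rO2 v)" for v
      using split Omega_part C_part by simp
  qed
qed

theorem lemma5p1:
  fixes J1 :: "'h1::{real_inner, complete_space} \<Rightarrow> 'h1"
    and J2 :: "'h2::{real_inner, complete_space} \<Rightarrow> 'h2"
    and JO1 :: "'o1::real_vector \<Rightarrow> 'o1" and JO2 :: "'o2::real_vector \<Rightarrow> 'o2"
    and JC1 :: "'c1::real_vector \<Rightarrow> 'c1" and JC2 :: "'c2::real_vector \<Rightarrow> 'c2"
    and JD1 :: "'d1::real_vector \<Rightarrow> 'd1" and JD2 :: "'d2::real_vector \<Rightarrow> 'd2"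
    and nO1 :: "'o1 \<Rightarrow> real" and nO2 :: "'o2 \<Rightarrow> real"
    and nC1 :: "'c1 \<Rightarrow> real" and nC2 :: "'c2 \<Rightarrow> real"
    and nD1 :: "'d1 \<Rightarrow> real" and nD2 :: "'d2 \<Rightarrow> real"
    and Tr1 :: "'h1 \<Rightarrow> 'd1" and Tr2 :: "'h2 \<Rightarrow> 'd2"
    and rO1 :: "'h1 \<Rightarrow> 'o1" and rO2 :: "'h2 \<Rightarrow> 'o2"
    and rC1 :: "'h1 \<Rightarrow> 'c1" and rC2 :: "'h2 \<Rightarrow> 'c2"
    and B :: "'h1 \<Rightarrow> 'h2 \<Rightarrow> complex"
    and BO :: "'o1 \<Rightarrow> 'o2 \<Rightarrow> complex"
    and BC :: "'c1 \<Rightarrow> 'c2 \<Rightarrow> complex"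
    and lam :: real
    and f :: 'd2 and g :: "'d1 \<Rightarrow> complex"
  assumes H1: "chilbert_struct J1" and H2: "chilbert_struct J2"
    and cO1: "cstruct JO1" and cO2: "cstruct JO2" and cC1: "cstruct JC1" and cC2: "cstruct JC2"
    and cD1: "cstruct JD1" and cD2: "cstruct JD2"
    and sO1: "cseminorm JO1 nO1" and sO2: "cseminorm JO2 nO2"
    and sC1: "cseminorm JC1 nC1" and sC2: "cseminorm JC2 nC2"
    and sD1: "cseminorm JD1 nD1" and sD2: "cseminorm JD2 nD2"
    and bTr1: "bounded_cmap J1 JD1 nD1 Tr1" and bTr2: "bounded_cmap J2 JD2 nD2 Tr2"
    and brO1: "bounded_cmap J1 JO1 nO1 rO1" and brO2: "bounded_cmap J2 JO2 nO2 rO2"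
    and brC1: "bounded_cmap J1 JC1 nC1 rC1" and brC2: "bounded_cmap J2 JC2 nC2 rC2"
    and B_bilin: "cbilin J1 J2 B"
    and B_bdd: "\<exists>K. \<forall>u v. cmod (B u v) \<le> K * norm u * norm v"
    and BO_bilin: "cbilin J1 J2 (\<lambda>u v. BO (rO1 u) (rO2 v))"
    and BO_bdd: "\<exists>K. \<forall>u v. cmod (BO (rO1 u) (rO2 v)) \<le> K * qnorm rO1 (rO1 u) * qnorm rO2 (rO2 v)"
    and BC_bilin: "cbilin J1 J2 (\<lambda>u v. BC (rC1 u) (rC2 v))"
    and BC_bdd: "\<exists>K. \<forall>u v. cmod (BC (rC1 u) (rC2 v)) \<le> K * qnorm rC1 (rC1 u) * qnorm rC2 (rC2 v)"
    and lam_pos: "lam > 0"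
    and infsup1: "\<forall>v. (SUP w\<in>-{0}. cmod (B w v) / norm w) \<ge> lam * norm v"
    and infsup2: "\<forall>u. (SUP w\<in>-{0}. cmod (B u w) / norm w) \<ge> lam * norm u"
    and split: "\<forall>u v. B u v = BO (rO1 u) (rO2 v) + BC (rC1 u) (rC2 v)"
    and glue1: "\<forall>\<phi> \<psi>. qeq Tr1 (Tr1 \<phi>) (Tr1 \<psi>) \<longrightarrow>
        (\<exists>w. qeq rO1 (rO1 w) (rO1 \<phi>) \<and> qeq rC1 (rC1 w) (rC1 \<psi>) \<and> qeq Tr1 (Tr1 w) (Tr1 \<phi>))"
    and glue2: "\<forall>\<phi> \<psi>. qeq Tr2 (Tr2 \<phi>) (Tr2 \<psi>) \<longrightarrow>
        (\<exists>w. qeq rO2 (rO2 w) (rO2 \<phi>) \<and> qeq rC2 (rC2 w) (rC2 \<psi>) \<and> qeq Tr2 (Tr2 w) (Tr2 \<phi>))"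
    and f_in: "f \<in> range Tr2"
    and g_lin: "clin J1 (\<lambda>z. \<i> * z) (\<lambda>\<phi>. g (Tr1 \<phi>))"
    and g_bdd: "\<exists>K. \<forall>\<phi>. cmod (g (Tr1 \<phi>)) \<le> K * qnorm Tr1 (Tr1 \<phi>)"
  shows "(\<forall>F v. qeq Tr2 (Tr2 F) f \<longrightarrow> (\<forall>\<phi>. B \<phi> v = BO (rO1 \<phi>) (rO2 F)) \<longrightarrow>
            L_vanishes_on_Omega Tr1 rO1 BO (- rO2 F + rO2 v))
       \<and> (\<forall>v. (\<forall>\<phi>. B \<phi> v = g (Tr1 \<phi>)) \<longrightarrow> L_vanishes_on_Omega Tr1 rO1 BO (rO2 v))"
proof -
  have lTr1: "linear Tr1" and lrO2: "linear rO2"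
    using bTr1 brO2 by (simp_all add: bounded_cmap_linear)
  have lg: "linear (\<lambda>\<phi>. g (Tr1 \<phi>))" using g_lin by (simp add: clin_def)
  obtain KO KC Kg where
    KO: "\<forall>u v. cmod (BO (rO1 u) (rO2 v)) \<le> KO * qnorm rO1 (rO1 u) * qnorm rO2 (rO2 v)"
    and KC: "\<forall>u v. cmod (BC (rC1 u) (rC2 v)) \<le> KC * qnorm rC1 (rC1 u) * qnorm rC2 (rC2 v)"
    and Kg: "\<forall>\<phi>. cmod (g (Tr1 \<phi>)) \<le> Kg * qnorm Tr1 (Tr1 \<phi>)"
    using BO_bdd BC_bdd g_bdd by blast
  note glued = glued_test_function[OF lTr1 bounded_cmap_linear[OF brO1] bounded_cmap_linear[OF brC1]
      cbilin_linear_left[OF BO_bilin] cbilin_linear_left[OF BC_bilin] KO[rule_format] KC[rule_format]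
      split[rule_format] glue1]
  show ?thesis
    unfolding L_vanishes_on_Omega_def
  proof (intro conjI allI impI)
    fix F v \<phi>
    assume F: "\<forall>\<phi>. B \<phi> v = BO (rO1 \<phi>) (rO2 F)" and trace_zero: "qeq Tr1 (Tr1 \<phi>) 0"
    obtain w where w_Omega: "\<And>x. BO (rO1 w) (rO2 x) = BO (rO1 \<phi>) (rO2 x)"
      and w_B: "\<And>x. B w x = BO (rO1 \<phi>) (rO2 x)"
      using glued[OF trace_zero] by metis
    have "BO (rO1 \<phi>) (- rO2 F + rO2 v) = BO (rO1 \<phi>) (rO2 (v - F))"
      by (simp add: linear_diff[OF lrO2])
    also have "\<dots> = BO (rO1 \<phi>) (rO2 v) - BO (rO1 \<phi>) (rO2 F)"
      using linear_diff[OF cbilin_linear_right[OF BO_bilin, of \<phi>]] by simp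
    also have "\<dots> = B w v - BO (rO1 w) (rO2 F)"
      by (simp add: w_Omega w_B)
    also have "\<dots> = 0"
      using F by simp
    finally show "BO (rO1 \<phi>) (- rO2 F + rO2 v) = 0" .
  next
    fix v \<phi>
    assume v: "\<forall>\<phi>. B \<phi> v = g (Tr1 \<phi>)" and trace_zero: "qeq Tr1 (Tr1 \<phi>) 0"
    obtain w where w_B: "\<And>x. B w x = BO (rO1 \<phi>) (rO2 x)"
      and w_trace: "qeq Tr1 (Tr1 w) (Tr1 \<phi>)"
      using glued[OF trace_zero] by metis
    have g_respects: "qeq Tr1 (Tr1 a) (Tr1 b) \<Longrightarrow> g (Tr1 a) = g (Tr1 b)" for a b
      using qnorm_dominated_respects_qeq[OF lTr1 lg, where K = Kg] Kg by simp
    have "BO (rO1 \<phi>) (rO2 v) = B w v"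
      using w_B by simp
    also have "\<dots> = g (Tr1 w)"
      using v by simp
    also have "\<dots> = g (Tr1 \<phi>)"
      using g_respects w_trace by blast
    also have "\<dots> = g (Tr1 0)"
      using g_respects[of \<phi> 0] trace_zero by (simp add: linear_0[OF lTr1])
    finally show "BO (rO1 \<phi>) (rO2 v) = 0"
      using linear_0[OF lg] by simp
  qed
qed

end
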